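(* Let $q=2$, $0\le J\le\pi/4$, and $U(J)=\begin{pmatrix}e^{-iJ}&0&0&0\\0&0&-ie^{iJ}&0\\0&-ie^{iJ}&0&0\\0&0&0&e^{-iJ}\end{pmatrix}$ in the basis $|00\rangle,|01\rangle,|10\rangle,|11\rangle$, so that $e_p(U(J))=\frac23\cos^2(2J)$. For a single-qubit unitary $u$, let $\Lambda(u)$ be the largest modulus of the nontrivial eigenvalues of the map $a\mapsto u\,\mathcal{M}_+^{U(J)}(a)\,u^\dagger$. (i) Over the family $w(\theta,\psi)=\begin{pmatrix}\cos\frac\theta2&-e^{i\psi/2}\sin\frac\theta2\\ e^{-i\psi/2}\sin\frac\theta2&\cos\frac\theta2\end{pmatrix}$, $\theta\in[0,\pi]$, $\psi\in[0,4\pi]$, one has $\min_{\theta,\psi}\Lambda(w)=\sqrt{\sin 2J}$, i.e. $-\ln\min\Lambda=-\frac14\ln\bigl(1-\tfrac32 e_p(U(J))\bigr)$. (ii) Over the family $v(\phi,\psi)=\frac1{\sqrt2}\begin{pmatrix}e^{i\phi/2}&-e^{i\psi/2}\\ e^{-i\psi/2}&e^{-i\phi/2}\end{pmatrix}$, $\phi,\psi\in[0,4\pi]$, the nontrivial eigenvalues are the roots of $\lambda^3-(\lambda^2-\lambda)\cos\phi\,\sin 2J-\sin^2 2J=0$, and $\min_{\phi,\psi}\Lambda(v)=\sin^{2/3}(2J)$, attained at $\phi=\pi/2$; i.e. $-\ln\min\Lambda=-\frac13\ln\bigl(1-\tfrac32 e_p(U(J))\bigr)$.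
   Context: For a unitary $U$ on $\mathbb{C}^2\otimes\mathbb{C}^2$, $\mathcal{M}_+^U(a)=\frac12\operatorname{tr}_1[U^\dagger(a\otimes I)U]$ on $2\times2$ matrices; it fixes $I$ and preserves traceless matrices, and so does $a\mapsto u\mathcal{M}_+^U(a)u^\dagger$; the nontrivial eigenvalues of such a map are the three eigenvalues of its restriction to traceless matrices. (For $U(J)$ one has $\mathcal{M}_+^{U(J)}(a)=\begin{pmatrix}a_{00}&\sin(2J)a_{01}\\ \sin(2J)a_{10}&a_{11}\end{pmatrix}$.) The entangling power $e_p$ is $e_p(U)=\frac{E(U)+E(US)-E(S)}{E(S)}$ with $E(U)=1-q^{-4}\operatorname{tr}[(U^{R_1}U^{R_1\dagger})^2]$, $\langle\beta\alpha|U^{R_1}|ji\rangle=\langle i\alpha|U|j\beta\rangle$, $S$ the swap, $q=2$. *)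

theory Defs
  imports Complex_Main "Jordan_Normal_Form.Matrix"
begin

text \<open>Conventions: complex matrices from Jordan_Normal_Form. Two-qubit basis
  |00>,|01>,|10>,|11> is indexed by 2*i1 + i2 (first factor i1, second i2).\<close>

definition mtrace :: "complex mat \<Rightarrow> complex" where
  "mtrace A = (\<Sum>i<dim_row A. A $$ (i,i))"

definition adj :: "complex mat \<Rightarrow> complex mat" where
  "adj A = mat (dim_col A) (dim_row A) (\<lambda>(i,j). cnj (A $$ (j,i)))"

definition tensor_I :: "complex mat \<Rightarrow> complex mat" where
  "tensor_I a = mat 4 4 (\<lambda>(r,c). a $$ (r div 2, c div 2) * (if r mod 2 = c mod 2 then 1 else 0))"

definition ptrace1 :: "complex mat \<Rightarrow> complex mat" where
  "ptrace1 X = mat 2 2 (\<lambda>(j,k). \<Sum>i<2. X $$ (2*i+j, 2*i+k))"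

definition Mplus :: "complex mat \<Rightarrow> complex mat \<Rightarrow> complex mat" where
  "Mplus U a = (1/2 :: complex) \<cdot>\<^sub>m ptrace1 (adj U * tensor_I a * U)"

text \<open>Nontrivial eigenvalues of a map on 2x2 matrices that preserves traceless
  matrices: the eigenvalues of its restriction to traceless matrices.\<close>
definition nontriv_eigs :: "(complex mat \<Rightarrow> complex mat) \<Rightarrow> complex set" where
  "nontriv_eigs \<Phi> = {l. \<exists>a \<in> carrier_mat 2 2. mtrace a = 0 \<and> a \<noteq> 0\<^sub>m 2 2 \<and> \<Phi> a = l \<cdot>\<^sub>m a}"

definition Lam :: "complex mat \<Rightarrow> complex mat \<Rightarrow> real" where
  "Lam U u = Max (cmod ` nontriv_eigs (\<lambda>a. u * Mplus U a * adj u))"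

definition UJ :: "real \<Rightarrow> complex mat" where
  "UJ J = (let e = cis (-J); f = - \<i> * cis J in
     mat_of_rows_list 4 [[e,0,0,0],[0,0,f,0],[0,f,0,0],[0,0,0,e]])"

definition wmat :: "real \<Rightarrow> real \<Rightarrow> complex mat" where
  "wmat \<theta> \<psi> = mat_of_rows_list 2
     [[complex_of_real (cos (\<theta>/2)), - cis (\<psi>/2) * complex_of_real (sin (\<theta>/2))],
      [cis (-\<psi>/2) * complex_of_real (sin (\<theta>/2)), complex_of_real (cos (\<theta>/2))]]"

definition vmat :: "real \<Rightarrow> real \<Rightarrow> complex mat" where
  "vmat \<phi> \<psi> = (1 / complex_of_real (sqrt 2)) \<cdot>\<^sub>m mat_of_rows_list 2
     [[cis (\<phi>/2), - cis (\<psi>/2)], [cis (-\<psi>/2), cis (-\<phi>/2)]]"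

text \<open>Realignment: <beta alpha|U^R1|j i> = <i alpha|U|j beta>.\<close>
definition realign :: "complex mat \<Rightarrow> complex mat" where
  "realign U = mat 4 4 (\<lambda>(r,c). U $$ (2*(c mod 2) + r mod 2, 2*(c div 2) + r div 2))"

definition swap :: "complex mat" where
  "swap = mat 4 4 (\<lambda>(r,c). if r = 2*(c mod 2) + c div 2 then 1 else 0)"

definition Eop :: "complex mat \<Rightarrow> complex" where
  "Eop U = 1 - (1 / 2^4) * mtrace ((realign U * adj (realign U)) * (realign U * adj (realign U)))"

definition ep :: "complex mat \<Rightarrow> complex" where
  "ep U = (Eop U + Eop (U * swap) - Eop swap) / Eop swap"

end

theory Submission
  imports Defs "Jordan_Normal_Form.Char_Poly" "HOL-Computational_Algebra.Fundamental_Theorem_Algebra"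
begin

text \<open>
  Write a traceless 2x2 matrix as \<open>[[z, x], [y, -z]]\<close>. For \<open>u = [[p, q], [-cnj q, cnj p]]\<close> with
  \<open>|p|\<^sup>2 + |q|\<^sup>2 = 1\<close> and for the map that scales the off-diagonal entries by \<open>s\<close>, the composite
  \<open>a \<mapsto> u (scaled a) u\<^sup>H\<close> acts on \<open>(x, y, z)\<close> by a 3x3 matrix whose characteristic polynomial is
  \<open>l\<^sup>3 - (s\<tau> + \<delta>) l\<^sup>2 + (s\<tau> + s\<^sup>2\<delta>) l - s\<^sup>2\<close> with \<open>\<tau> = p\<^sup>2 + (cnj p)\<^sup>2\<close> and
  \<open>\<delta> = |p|\<^sup>2 - |q|\<^sup>2\<close>. The channel of \<open>U(J)\<close> is exactly this off-diagonal scaling with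
  \<open>s = sin 2J\<close>, and both \<open>v\<close> and \<open>w\<close> have the shape of \<open>u\<close>: for \<open>v\<close> the polynomial is the cubic of
  the statement, for \<open>w\<close> it factors as \<open>(l - s)(l\<^sup>2 - cos \<theta> (1 + s) l + s)\<close>.
  The moduli of the roots of a monic polynomial multiply to \<open>|p(0)|\<close>, so the largest one is at
  least \<open>s\<^bsup>2/3\<^esup>\<close> for \<open>v\<close> and, from the quadratic factor, at least \<open>\<surd>s\<close> for \<open>w\<close>; at
  \<open>\<phi> = \<pi>/2\<close>, resp. \<open>\<theta> = \<pi>/2\<close>, these bounds are attained.
  The entangling power is a direct computation: \<open>U(J)\<close> is a swap with unimodular phases and
  \<open>U(J) S\<close> is diagonal.
\<close>

section \<open>Roots of monic complex polynomials\<close>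

lemma complex_poly_roots_nonempty:
  fixes p :: "complex poly"
  shows "0 < degree p \<Longrightarrow> {z. poly p z = 0} \<noteq> {}"
  using fundamental_theorem_of_algebra[of p] by (auto simp: constant_degree)

lemma root_norm_poly_0_le_Max_norm_roots:
  fixes p :: "complex poly"
  assumes monic: "lead_coeff p = 1" and deg: "0 < degree p"
  shows "root (degree p) (cmod (poly p 0)) \<le> Max (cmod ` {z. poly p z = 0})"
proof -
  define n where "n = degree p"
  obtain r where "smult (lead_coeff p) (\<Prod>i<degree p. [:- r i, 1:]) = p"
    using complex_poly_decompose' by blast
  then have p_eq: "p = (\<Prod>i<n. [:- r i, 1:])"
    using monic unfolding n_def by simp
  have poly_p: "poly p z = (\<Prod>i<n. poly [:- r i, 1:] z)" for z
    unfolding p_eq by (rule poly_prod)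
  define M where "M = Max (cmod ` {z. poly p z = 0})"
  have fin: "finite {z. poly p z = 0}"
    using monic by (intro poly_roots_finite) auto
  have r_le: "cmod (r i) \<le> M" if "i < n" for i
  proof -
    have "poly p (r i) = 0"
      using that by (auto simp: poly_p)
    then show ?thesis
      unfolding M_def using fin by (auto intro: Max_ge)
  qed
  have "0 \<le> M"
    using r_le[of 0] deg norm_ge_zero order_trans unfolding n_def by blast
  have "cmod (poly p 0) = (\<Prod>i<n. cmod (r i))"
    by (simp add: poly_p flip: prod_norm)
  also have "\<dots> \<le> M ^ n"
    using r_le prod_mono[of "{..<n}" "\<lambda>i. cmod (r i)" "\<lambda>_. M"] by simp
  finally have "root n (cmod (poly p 0)) \<le> root n (M ^ n)"
    using deg unfolding n_def by (intro real_root_le_mono) auto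
  also have "\<dots> = M"
    using deg \<open>0 \<le> M\<close> unfolding n_def by (rule real_root_power_cancel)
  finally show ?thesis
    unfolding M_def n_def .
qed

lemma root_3_square_eq_powr:
  assumes "0 \<le> x"
  shows "root 3 (x\<^sup>2) = x powr (2/3)"
proof -
  have "root 3 (x\<^sup>2) = (x powr 2) powr (1/3)"
    using assms by (simp add: root_powr_inverse)
  also have "\<dots> = x powr (2/3)"
    by (simp add: powr_powr)
  finally show ?thesis .
qed

text \<open>Unlike \<open>less_Suc_eq\<close> with \<open>eval_nat_numeral\<close>, this splits index ranges while
  keeping the indices as numerals, so that \<open>div\<close> and \<open>mod\<close> on them still evaluate.\<close>

lemma less_numeral_iff_pred: "(i::nat) < numeral k \<longleftrightarrow> i = pred_numeral k \<or> i < pred_numeral k"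
  by (metis less_Suc_eq numeral_eq_Suc)

lemma det_mat_2: "det (mat 2 2 f) = f (0,0) * f (1,1) - f (0,1) * f (1,0)"
  by (subst laplace_expansion_column[where j=0])
     (auto simp: sum.lessThan_Suc cofactor_def eval_nat_numeral det_single mat_delete_def insert_index_def)

lemma det_mat_3:
  "det (mat 3 3 f) =
     f (0,0) * (f (1,1) * f (2,2) - f (1,2) * f (2,1))
   - f (0,1) * (f (1,0) * f (2,2) - f (1,2) * f (2,0))
   + f (0,2) * (f (1,0) * f (2,1) - f (1,1) * f (2,0))"
  by (subst laplace_expansion_column[where j=0])
     (auto simp: sum.lessThan_Suc cofactor_def mat_delete_def det_mat_2[unfolded numeral_2_eq_2]
        insert_index_def eval_nat_numeral algebra_simps)

lemma char_matrix_mat: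
  "char_matrix (mat n n f) l = mat n n (\<lambda>(i,j). f (i,j) - (if i = j then l else 0))"
  unfolding char_matrix_def by (rule eq_matI) auto

section \<open>Nontrivial eigenvalues in traceless coordinates\<close>

definition traceless_mat :: "complex vec \<Rightarrow> complex mat" where
  "traceless_mat v = mat 2 2 (\<lambda>(i,j). [[v$2, v$0], [v$1, - v$2]] ! i ! j)"

lemma traceless_mat_carrier: "traceless_mat v \<in> carrier_mat 2 2"
  unfolding traceless_mat_def by simp

lemma mtrace_traceless_mat: "mtrace (traceless_mat v) = 0"
  unfolding traceless_mat_def mtrace_def by (simp add: eval_nat_numeral)

lemma traceless_mat_smult:
  "v \<in> carrier_vec 3 \<Longrightarrow> traceless_mat (l \<cdot>\<^sub>v v) = l \<cdot>\<^sub>m traceless_mat v"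
  unfolding traceless_mat_def by (rule eq_matI) (auto simp: less_Suc_eq eval_nat_numeral)

lemma traceless_mat_inj:
  assumes "v \<in> carrier_vec 3" "w \<in> carrier_vec 3" "traceless_mat v = traceless_mat w"
  shows "v = w"
proof (rule eq_vecI)
  have "traceless_mat v $$ (i,j) = traceless_mat w $$ (i,j)" for i j
    using assms(3) by simp
  from this[of 0 1] this[of 1 0] this[of 0 0]
  show "v $ i = w $ i" if "i < dim_vec w" for i
    using that assms(2) by (auto simp: traceless_mat_def less_Suc_eq eval_nat_numeral)
qed (use assms in auto)

lemma traceless_mat_eq_zero_iff:
  assumes "v \<in> carrier_vec 3"
  shows "traceless_mat v = 0\<^sub>m 2 2 \<longleftrightarrow> v = 0\<^sub>v 3"
proof -
  have "traceless_mat (0\<^sub>v 3) = 0\<^sub>m 2 2"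
    unfolding traceless_mat_def by (rule eq_matI) (auto simp: less_Suc_eq eval_nat_numeral)
  then show ?thesis
    using traceless_mat_inj[of v "0\<^sub>v 3"] assms by auto
qed

lemma traceless_matE:
  assumes "a \<in> carrier_mat 2 2" "mtrace a = 0"
  obtains v where "v \<in> carrier_vec 3" "a = traceless_mat v"
proof
  show "vec 3 (\<lambda>i. [a $$ (0,1), a $$ (1,0), a $$ (0,0)] ! i) \<in> carrier_vec 3" by simp
  have "a $$ (1,1) = - a $$ (0,0)"
    using assms unfolding mtrace_def by (simp add: eval_nat_numeral add_eq_0_iff)
  then show "a = traceless_mat (vec 3 (\<lambda>i. [a $$ (0,1), a $$ (1,0), a $$ (0,0)] ! i))"
    using assms(1) unfolding traceless_mat_def by (intro eq_matI) (auto simp: less_Suc_eq eval_nat_numeral)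
qed

lemma nontriv_eigs_iff_eigenvalue:
  assumes C: "C \<in> carrier_mat 3 3"
    and \<Phi>: "\<And>v. v \<in> carrier_vec 3 \<Longrightarrow> \<Phi> (traceless_mat v) = traceless_mat (C *\<^sub>v v)"
  shows "l \<in> nontriv_eigs \<Phi> \<longleftrightarrow> eigenvalue C l"
proof
  assume "l \<in> nontriv_eigs \<Phi>"
  then obtain a where a: "a \<in> carrier_mat 2 2" "mtrace a = 0" "a \<noteq> 0\<^sub>m 2 2" "\<Phi> a = l \<cdot>\<^sub>m a"
    unfolding nontriv_eigs_def by blast
  obtain v where v: "v \<in> carrier_vec 3" "a = traceless_mat v"
    using a(1,2) by (rule traceless_matE)
  have "traceless_mat (C *\<^sub>v v) = traceless_mat (l \<cdot>\<^sub>v v)"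
    using a(4) \<Phi> v by (simp add: traceless_mat_smult)
  then have "C *\<^sub>v v = l \<cdot>\<^sub>v v"
    using C v by (intro traceless_mat_inj) auto
  moreover have "v \<noteq> 0\<^sub>v 3"
    using a(3) v traceless_mat_eq_zero_iff by auto
  ultimately show "eigenvalue C l"
    using v C unfolding eigenvalue_def eigenvector_def by auto
next
  assume "eigenvalue C l"
  then obtain v where v: "v \<in> carrier_vec 3" "v \<noteq> 0\<^sub>v 3" "C *\<^sub>v v = l \<cdot>\<^sub>v v"
    using C unfolding eigenvalue_def eigenvector_def by auto
  have "traceless_mat v \<noteq> 0\<^sub>m 2 2" "\<Phi> (traceless_mat v) = l \<cdot>\<^sub>m traceless_mat v"
    using v \<Phi> traceless_mat_eq_zero_iff traceless_mat_smult by simp_all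
  then show "l \<in> nontriv_eigs \<Phi>"
    unfolding nontriv_eigs_def using traceless_mat_carrier mtrace_traceless_mat by blast
qed

section \<open>Off-diagonal scaling conjugated by SU(2)\<close>

definition su2 :: "complex \<Rightarrow> complex \<Rightarrow> complex mat" where
  "su2 p q = mat 2 2 (\<lambda>(i,j). [[p, q], [- cnj q, cnj p]] ! i ! j)"

definition offdiag_scale :: "complex \<Rightarrow> complex mat \<Rightarrow> complex mat" where
  "offdiag_scale s a = mat 2 2 (\<lambda>(i,j). if i = j then a $$ (i,j) else s * a $$ (i,j))"

definition su2_offdiag_matrix :: "complex \<Rightarrow> complex \<Rightarrow> complex \<Rightarrow> complex mat" where
  "su2_offdiag_matrix p q s = mat 3 3 (\<lambda>(i,j).
     [[s * p\<^sup>2, - s * q\<^sup>2, - 2 * p * q],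
      [- s * (cnj q)\<^sup>2, s * (cnj p)\<^sup>2, - 2 * cnj p * cnj q],
      [s * p * cnj q, s * q * cnj p, p * cnj p - q * cnj q]] ! i ! j)"

lemma su2_offdiag_scale_traceless_mat:
  assumes "v \<in> carrier_vec 3"
  shows "su2 p q * offdiag_scale s (traceless_mat v) * adj (su2 p q)
       = traceless_mat (su2_offdiag_matrix p q s *\<^sub>v v)"
  using assms
  unfolding su2_def offdiag_scale_def traceless_mat_def su2_offdiag_matrix_def adj_def
  by (intro eq_matI)
     (auto simp: less_Suc_eq eval_nat_numeral scalar_prod_def sum.atLeast0_lessThan_Suc
        algebra_simps power2_eq_square)

definition su2_offdiag_char_poly :: "complex \<Rightarrow> complex \<Rightarrow> complex \<Rightarrow> complex poly" where
  "su2_offdiag_char_poly p q s =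
     (let \<tau> = p\<^sup>2 + (cnj p)\<^sup>2; \<delta> = p * cnj p - q * cnj q
      in [:- (s\<^sup>2), s * \<tau> + s\<^sup>2 * \<delta>, - (s * \<tau> + \<delta>), 1:])"

lemma det_char_matrix_su2_offdiag:
  assumes "p * cnj p + q * cnj q = 1"
  shows "det (char_matrix (su2_offdiag_matrix p q s) l) = - poly (su2_offdiag_char_poly p q s) l"
proof -
  txt \<open>Unitarity of \<open>su2 p q\<close> enters only through a multiple of \<open>|p|\<^sup>2 + |q|\<^sup>2 - 1\<close>.\<close>
  let ?a = "p * cnj p" and ?b = "q * cnj q" and ?\<tau> = "p\<^sup>2 + (cnj p)\<^sup>2"
  have "det (char_matrix (su2_offdiag_matrix p q s) l) = - poly (su2_offdiag_char_poly p q s) l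
      + (?a + ?b - 1) * (s\<^sup>2 * ((?a + ?b)\<^sup>2 + (?a + ?b) + 1 - (?a - ?b) * l) - s * l * ?\<tau>)"
    unfolding su2_offdiag_matrix_def char_matrix_mat det_mat_3 su2_offdiag_char_poly_def Let_def
    by (simp add: algebra_simps power2_eq_square)
  with assms show ?thesis
    by simp
qed

lemma nontriv_eigs_su2_offdiag_scale:
  assumes "p * cnj p + q * cnj q = 1"
  shows "nontriv_eigs (\<lambda>a. su2 p q * offdiag_scale s a * adj (su2 p q))
       = {l. poly (su2_offdiag_char_poly p q s) l = 0}"
proof -
  have C: "su2_offdiag_matrix p q s \<in> carrier_mat 3 3"
    unfolding su2_offdiag_matrix_def by simp
  show ?thesis
    using nontriv_eigs_iff_eigenvalue[OF C su2_offdiag_scale_traceless_mat]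
      eigenvalue_det[OF C] det_char_matrix_su2_offdiag[OF assms]
    by auto
qed

section \<open>The gate U(J)\<close>

definition phased_swap :: "complex \<Rightarrow> complex \<Rightarrow> complex mat" where
  "phased_swap e f = mat_of_rows_list 4 [[e,0,0,0], [0,0,f,0], [0,f,0,0], [0,0,0,e]]"

lemma UJ_eq_phased_swap: "UJ J = phased_swap (cis (-J)) (- \<i> * cis J)"
  unfolding UJ_def phased_swap_def Let_def ..

lemma phased_swap_1_1: "phased_swap 1 1 = swap"
  unfolding swap_def phased_swap_def mat_of_rows_list_def
  by (rule eq_matI) (auto simp: less_numeral_iff_pred)

lemma cnj_mult_self_eq_1: "cmod z = 1 \<Longrightarrow> cnj z * z = 1"
  using complex_norm_square[of z] by (simp add: mult.commute)

lemma Mplus_phased_swap: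
  assumes "cmod e = 1" "cmod f = 1" "a \<in> carrier_mat 2 2"
  shows "Mplus (phased_swap e f) a = offdiag_scale ((cnj e * f + cnj f * e) / 2) a"
proof -
  have unit: "e * (cnj e * x) = x" "f * (cnj f * x) = x" for x
    using assms(1,2)[THEN cnj_mult_self_eq_1] by (simp_all add: mult.assoc[symmetric] mult.commute)
  show ?thesis
    using assms(3)
    unfolding Mplus_def ptrace1_def adj_def tensor_I_def phased_swap_def offdiag_scale_def mat_of_rows_list_def
    by (intro eq_matI) (auto simp: less_numeral_iff_pred atLeast0LessThan lessThan_nat_numeral scalar_prod_def algebra_simps unit)
qed

lemma Eop_phased_swap:
  assumes "cmod e = 1" "cmod f = 1"
  shows "Eop (phased_swap e f) = 3/4"
  using assms[THEN cnj_mult_self_eq_1]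
  unfolding Eop_def mtrace_def realign_def adj_def phased_swap_def mat_of_rows_list_def
  by (simp add: atLeast0LessThan lessThan_nat_numeral scalar_prod_def algebra_simps)

lemma Eop_phased_swap_swap:
  assumes "cmod e = 1" "cmod f = 1"
  shows "Eop (phased_swap e f * swap) = 1/2 - (e * cnj f + f * cnj e) * (cnj e * f + cnj f * e) / 8"
  using assms[THEN cnj_mult_self_eq_1]
  unfolding Eop_def mtrace_def realign_def adj_def phased_swap_def swap_def mat_of_rows_list_def
  by (simp add: atLeast0LessThan lessThan_nat_numeral scalar_prod_def algebra_simps)

lemma UJ_phases: "cmod (cis (-J)) = 1" "cmod (- \<i> * cis J) = 1"
  by (simp_all add: norm_mult)

lemma UJ_phase_sum:
  "cnj (cis (-J)) * (- \<i> * cis J) + cnj (- \<i> * cis J) * cis (-J) = 2 * sin (2*J)"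
  "cis (-J) * cnj (- \<i> * cis J) + (- \<i> * cis J) * cnj (cis (-J)) = 2 * sin (2*J)"
  by (simp_all add: complex_eq_iff sin_double)

lemma Mplus_UJ:
  assumes "a \<in> carrier_mat 2 2"
  shows "Mplus (UJ J) a = offdiag_scale (sin (2*J)) a"
proof -
  have "(cnj (cis (-J)) * (- \<i> * cis J) + cnj (- \<i> * cis J) * cis (-J)) / 2 = sin (2*J)"
    unfolding UJ_phase_sum by simp
  then show ?thesis
    unfolding UJ_eq_phased_swap Mplus_phased_swap[OF UJ_phases assms] by simp
qed

lemma ep_UJ: "ep (UJ J) = complex_of_real (2/3 * (cos (2*J))\<^sup>2)"
proof -
  have E_UJ_swap: "Eop (UJ J * swap) = (1 - complex_of_real ((sin (2*J))\<^sup>2)) / 2"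
    unfolding UJ_eq_phased_swap Eop_phased_swap_swap[OF UJ_phases] UJ_phase_sum
    by (simp add: power2_eq_square field_simps)
  have E_UJ: "Eop (UJ J) = 3/4"
    unfolding UJ_eq_phased_swap by (rule Eop_phased_swap[OF UJ_phases])
  have E_swap: "Eop swap = 3/4"
    unfolding phased_swap_1_1[symmetric] by (rule Eop_phased_swap) simp_all
  show ?thesis
    unfolding ep_def E_UJ_swap E_UJ E_swap by (simp add: cos_squared_eq field_simps)
qed

lemma one_minus_ep_UJ: "1 - 3/2 * Re (ep (UJ J)) = (sin (2*J))\<^sup>2"
  unfolding ep_UJ by (simp add: sin_squared_eq)

lemma nontriv_eigs_UJ_su2:
  assumes "p * cnj p + q * cnj q = 1"
  shows "nontriv_eigs (\<lambda>a. su2 p q * Mplus (UJ J) a * adj (su2 p q))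
       = {l. poly (su2_offdiag_char_poly p q (sin (2*J))) l = 0}"
proof -
  have "nontriv_eigs (\<lambda>a. su2 p q * Mplus (UJ J) a * adj (su2 p q))
      = nontriv_eigs (\<lambda>a. su2 p q * offdiag_scale (sin (2*J)) a * adj (su2 p q))"
    unfolding nontriv_eigs_def by (auto simp: Mplus_UJ)
  then show ?thesis
    using nontriv_eigs_su2_offdiag_scale[OF assms] by simp
qed

section \<open>The two families of local unitaries\<close>

lemma vmat_eq_su2: "vmat \<phi> \<psi> = su2 (cis (\<phi>/2) / sqrt 2) (- cis (\<psi>/2) / sqrt 2)"
  unfolding vmat_def su2_def mat_of_rows_list_def
  by (rule eq_matI) (auto simp: less_numeral_iff_pred cis_cnj)

lemma wmat_eq_su2: "wmat \<theta> \<psi> = su2 (cos (\<theta>/2)) (- cis (\<psi>/2) * sin (\<theta>/2))"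
  unfolding wmat_def su2_def mat_of_rows_list_def
  by (rule eq_matI) (auto simp: less_numeral_iff_pred cis_cnj)

lemma nontriv_eigs_UJ_vmat:
  "nontriv_eigs (\<lambda>a. vmat \<phi> \<psi> * Mplus (UJ J) a * adj (vmat \<phi> \<psi>))
   = {l. poly [:- (complex_of_real (sin (2*J)))\<^sup>2, complex_of_real (sin (2*J) * cos \<phi>),
              - complex_of_real (sin (2*J) * cos \<phi>), 1:] l = 0}"
proof -
  define p where "p = cis (\<phi>/2) / sqrt 2"
  define q where "q = - cis (\<psi>/2) / sqrt 2"
  have half: "p * cnj p = 1/2" "q * cnj q = 1/2"
    unfolding complex_norm_square[symmetric] p_def q_def by (simp_all add: norm_divide power_divide)
  have "p\<^sup>2 + (cnj p)\<^sup>2 = (cis \<phi> + cis (-\<phi>)) / 2"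
    unfolding p_def by (simp add: power_divide DeMoivre cis_cnj flip: of_real_power)
  also have "\<dots> = cos \<phi>"
    by (simp add: complex_eq_iff)
  finally have "su2_offdiag_char_poly p q (sin (2*J))
      = [:- (complex_of_real (sin (2*J)))\<^sup>2, complex_of_real (sin (2*J) * cos \<phi>),
          - complex_of_real (sin (2*J) * cos \<phi>), 1:]"
    unfolding su2_offdiag_char_poly_def Let_def half by simp
  then show ?thesis
    unfolding vmat_eq_su2 p_def[symmetric] q_def[symmetric]
    using nontriv_eigs_UJ_su2[of p q J] half by simp
qed

lemma nontriv_eigs_vmat_iff:
  "l \<in> nontriv_eigs (\<lambda>a. vmat \<phi> \<psi> * Mplus (UJ J) a * adj (vmat \<phi> \<psi>)) \<longleftrightarrow>
   l^3 - (l^2 - l) * complex_of_real (cos \<phi> * sin (2*J)) - complex_of_real ((sin (2*J))^2) = 0"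
  unfolding nontriv_eigs_UJ_vmat by (simp add: algebra_simps power2_eq_square power3_eq_cube)

lemma nontriv_eigs_UJ_wmat:
  "nontriv_eigs (\<lambda>a. wmat \<theta> \<psi> * Mplus (UJ J) a * adj (wmat \<theta> \<psi>))
   = {l. poly ([:- complex_of_real (sin (2*J)), 1:]
              * [:complex_of_real (sin (2*J)), - complex_of_real (cos \<theta> * (1 + sin (2*J))), 1:]) l = 0}"
proof -
  define p where "p = complex_of_real (cos (\<theta>/2))"
  define q where "q = - cis (\<psi>/2) * sin (\<theta>/2)"
  have pp: "p * cnj p = (cos (\<theta>/2))\<^sup>2" and qq: "q * cnj q = (sin (\<theta>/2))\<^sup>2"
    unfolding complex_norm_square[symmetric] p_def q_def by (simp_all add: norm_mult)
  have unit: "p * cnj p + q * cnj q = 1"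
    unfolding pp qq by (simp flip: of_real_power of_real_add)
  have tau: "p\<^sup>2 + (cnj p)\<^sup>2 = 1 + cos \<theta>"
    using cos_double_cos[of "\<theta>/2"] unfolding p_def by (simp flip: of_real_power)
  have delta: "p * cnj p - q * cnj q = cos \<theta>"
    using cos_double[of "\<theta>/2"] unfolding pp qq by (simp flip: of_real_power of_real_diff)
  have "su2_offdiag_char_poly p q (sin (2*J))
      = [:- complex_of_real (sin (2*J)), 1:]
        * [:complex_of_real (sin (2*J)), - complex_of_real (cos \<theta> * (1 + sin (2*J))), 1:]"
    unfolding su2_offdiag_char_poly_def Let_def tau delta
    by (simp add: algebra_simps power2_eq_square)
  then show ?thesis
    unfolding wmat_eq_su2 p_def[symmetric] q_def[symmetric]
    using nontriv_eigs_UJ_su2[OF unit, of J] by simp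
qed

lemma sqrt_sin_le_Lam_wmat:
  assumes "0 \<le> sin (2*J)"
  shows "sqrt (sin (2*J)) \<le> Lam (UJ J) (wmat \<theta> \<psi>)"
proof -
  let ?s = "complex_of_real (sin (2*J))"
  let ?Q = "[:?s, - complex_of_real (cos \<theta> * (1 + sin (2*J))), 1:]"
  let ?P = "[:- ?s, 1:] * ?Q"
  have deg: "degree ?Q = 2" and monic: "lead_coeff ?Q = 1"
    by (simp_all add: eval_nat_numeral)
  have roots: "{l. poly ?Q l = 0} \<subseteq> {l. poly ?P l = 0}"
    unfolding poly_mult by auto
  have "sqrt (sin (2*J)) = root 2 (cmod (poly ?Q 0))"
    using assms by (simp add: sqrt_def)
  also have "\<dots> \<le> Max (cmod ` {l. poly ?Q l = 0})"
    using root_norm_poly_0_le_Max_norm_roots[OF monic] unfolding deg by simp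
  also have "\<dots> \<le> Max (cmod ` {l. poly ?P l = 0})"
    using complex_poly_roots_nonempty[of ?Q] poly_roots_finite[of ?P] deg roots
    by (intro Max_mono image_mono) auto
  finally show ?thesis
    unfolding Lam_def nontriv_eigs_UJ_wmat .
qed

lemma Lam_wmat_pi_half:
  assumes s: "0 \<le> sin (2*J)"
  shows "Lam (UJ J) (wmat (pi/2) \<psi>) = sqrt (sin (2*J))"
proof (rule antisym)
  let ?s = "complex_of_real (sin (2*J))"
  let ?R = "{l. poly ([:- ?s, 1:] * [:?s, 0, 1:]) l = 0}"
  have "cmod l \<le> sqrt (sin (2*J))" if "l \<in> ?R" for l
  proof -
    from that consider "l = ?s" | "l\<^sup>2 = - ?s"
      unfolding poly_mult by (auto simp: power2_eq_square add_eq_0_iff)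
    then show ?thesis
    proof cases
      case 1
      have "sin (2*J) = sqrt (sin (2*J)) * sqrt (sin (2*J))"
        using s by simp
      also have "\<dots> \<le> sqrt (sin (2*J))"
        using s by (intro mult_left_le) auto
      finally show ?thesis
        using 1 s by simp
    next
      case 2
      then have "(cmod l)\<^sup>2 = sin (2*J)"
        using s by (simp flip: norm_power)
      then show ?thesis
        using real_sqrt_unique[of "cmod l"] by simp
    qed
  qed
  moreover have "finite ?R"
    by (intro poly_roots_finite) simp
  moreover have "?s \<in> ?R"
    by simp
  then have "?R \<noteq> {}"
    by blast
  ultimately have "Max (cmod ` ?R) \<le> sqrt (sin (2*J))"
    by (intro Max.boundedI) auto
  then show "Lam (UJ J) (wmat (pi/2) \<psi>) \<le> sqrt (sin (2*J))"
    unfolding Lam_def nontriv_eigs_UJ_wmat by simp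
qed (rule sqrt_sin_le_Lam_wmat[OF s])

lemma sin_powr_le_Lam_vmat:
  assumes "0 \<le> sin (2*J)"
  shows "sin (2*J) powr (2/3) \<le> Lam (UJ J) (vmat \<phi> \<psi>)"
proof -
  let ?s = "complex_of_real (sin (2*J))"
  let ?P = "[:- ?s\<^sup>2, complex_of_real (sin (2*J) * cos \<phi>), - complex_of_real (sin (2*J) * cos \<phi>), 1:]"
  have deg: "degree ?P = 3" and monic: "lead_coeff ?P = 1"
    by (simp_all add: eval_nat_numeral)
  have "sin (2*J) powr (2/3) = root 3 (cmod (poly ?P 0))"
    using assms by (simp add: root_3_square_eq_powr flip: of_real_power)
  also have "\<dots> \<le> Max (cmod ` {l. poly ?P l = 0})"
    using root_norm_poly_0_le_Max_norm_roots[OF monic] unfolding deg by simp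
  finally show ?thesis
    unfolding Lam_def nontriv_eigs_UJ_vmat .
qed

lemma Lam_vmat_pi_half:
  assumes s: "0 \<le> sin (2*J)"
  shows "Lam (UJ J) (vmat (pi/2) \<psi>) = sin (2*J) powr (2/3)"
proof (rule antisym)
  let ?s = "complex_of_real (sin (2*J))"
  let ?R = "{l. poly [:- ?s\<^sup>2, 0, 0, 1:] l = 0}"
  have "cmod l = sin (2*J) powr (2/3)" if "l \<in> ?R" for l
  proof -
    from that have "l ^ 3 = ?s\<^sup>2"
      by (simp add: power3_eq_cube mult.assoc)
    then have "cmod l ^ 3 = (sin (2*J))\<^sup>2"
      by (simp flip: norm_power of_real_power)
    then show ?thesis
      using real_root_power_cancel[of 3 "cmod l"] s by (simp add: root_3_square_eq_powr)
  qed
  moreover have "finite ?R"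
    by (intro poly_roots_finite) simp
  moreover have "?R \<noteq> {}"
    by (rule complex_poly_roots_nonempty) (simp add: eval_nat_numeral)
  ultimately have "Max (cmod ` ?R) \<le> sin (2*J) powr (2/3)"
    by (intro Max.boundedI) auto
  then show "Lam (UJ J) (vmat (pi/2) \<psi>) \<le> sin (2*J) powr (2/3)"
    unfolding Lam_def nontriv_eigs_UJ_vmat by simp
qed (rule sin_powr_le_Lam_vmat[OF s])

lemma neg_ln_minima_ep_UJ:
  assumes "0 < sin (2*J)"
  shows "- ln (sqrt (sin (2*J))) = - (1/4) * ln (1 - 3/2 * Re (ep (UJ J)))"
    and "- ln (sin (2*J) powr (2/3)) = - (1/3) * ln (1 - 3/2 * Re (ep (UJ J)))"
  using assms unfolding one_minus_ep_UJ by (simp_all add: ln_sqrt ln_realpow)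

theorem mainTheorem10:
  fixes J :: real
  assumes "0 \<le> J" and "J \<le> pi/4"
  shows "ep (UJ J) = complex_of_real (2/3 * (cos (2*J))^2)
    \<and> ((\<forall>\<theta>\<in>{0..pi}. \<forall>\<psi>\<in>{0..4*pi}. sqrt (sin (2*J)) \<le> Lam (UJ J) (wmat \<theta> \<psi>))
       \<and> (\<exists>\<theta>\<in>{0..pi}. \<exists>\<psi>\<in>{0..4*pi}. Lam (UJ J) (wmat \<theta> \<psi>) = sqrt (sin (2*J)))
       \<and> (0 < J \<longrightarrow> - ln (sqrt (sin (2*J))) = - (1/4) * ln (1 - 3/2 * Re (ep (UJ J)))))
    \<and> ((\<forall>\<phi>\<in>{0..4*pi}. \<forall>\<psi>\<in>{0..4*pi}. \<forall>l.
          l \<in> nontriv_eigs (\<lambda>a. vmat \<phi> \<psi> * Mplus (UJ J) a * adj (vmat \<phi> \<psi>)) \<longleftrightarrow>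
          l^3 - (l^2 - l) * complex_of_real (cos \<phi> * sin (2*J)) - complex_of_real ((sin (2*J))^2) = 0)
       \<and> (\<forall>\<phi>\<in>{0..4*pi}. \<forall>\<psi>\<in>{0..4*pi}. sin (2*J) powr (2/3) \<le> Lam (UJ J) (vmat \<phi> \<psi>))
       \<and> (\<exists>\<psi>\<in>{0..4*pi}. Lam (UJ J) (vmat (pi/2) \<psi>) = sin (2*J) powr (2/3))
       \<and> (0 < J \<longrightarrow> - ln (sin (2*J) powr (2/3)) = - (1/3) * ln (1 - 3/2 * Re (ep (UJ J)))))"
proof -
  have s: "0 \<le> sin (2*J)"
    using assms by (intro sin_ge_zero) auto
  have pos: "0 < sin (2*J)" if "0 < J"
    using that assms by (intro sin_gt_zero) auto
  have w_min: "\<exists>\<theta>\<in>{0..pi}. \<exists>\<psi>\<in>{0..4*pi}. Lam (UJ J) (wmat \<theta> \<psi>) = sqrt (sin (2*J))"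
    using Lam_wmat_pi_half[OF s, of 0] by (intro bexI[of _ "pi/2"] bexI[of _ 0]) auto
  have v_min: "\<exists>\<psi>\<in>{0..4*pi}. Lam (UJ J) (vmat (pi/2) \<psi>) = sin (2*J) powr (2/3)"
    using Lam_vmat_pi_half[OF s, of 0] by (intro bexI[of _ 0]) auto
  show ?thesis
    using ep_UJ sqrt_sin_le_Lam_wmat[OF s] w_min neg_ln_minima_ep_UJ[OF pos]
      nontriv_eigs_vmat_iff sin_powr_le_Lam_vmat[OF s] v_min
    by (intro conjI ballI allI impI) simp_all
qed

end
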